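(* Let $k\ge 2$, let $B=M\cup\{\omega_1,\ldots,\omega_p\}$ with $p\ge 1$ and $\omega_1,\ldots,\omega_p\in P_k\setminus M$, and let $F$ be a finite system of functions from $P_k(n)$. Then $$I_B(F)\le\left\lceil \log_{u(B)}\bigl(d(F)+1\bigr)\right\rceil .$$
   Context: Let $k\ge 2$ be an integer and $E_k=\{0,1,\ldots,k-1\}$. $P_k(n)$ denotes the set of all functions $E_k^n\to E_k$, and $P_k=\bigcup_n P_k(n)$. Tuples in $E_k^n$ are ordered componentwise: $\tilde\alpha\le\tilde\beta$ iff $\alpha_j\le\beta_j$ for all $j$. A function $f$ is monotone if $\tilde\alpha\le\tilde\beta$ implies $f(\tilde\alpha)\le f(\tilde\beta)$; $M$ is the set of all monotone functions in $P_k$ (of all arities, including constants). A basis is a set $B=M\cup\{\omega_1,\ldots,\omega_p\}$ with $p\ge1$ and $\omega_i\in P_k\setminus M$. A circuit over $B$ with inputs $x_1,\ldots,x_n$ is a finite directed acyclic graph whose source nodes are labelled by the variables $x_1,\ldots,x_n$ and each of whose other nodes (gates) is labelled by a $q$-ary function from $B$ and has $q$ ordered incoming edges; each node computes a function of $P_k(n)$ in the obvious way. A circuit realizes a system $F$ of functions of $x_1,\ldots,x_n$ if every function of $F$ is computed at some node. Gates labelled by functions of $M$ have weight $0$, gates labelled by some $\omega_i$ have weight $1$. The non-monotone complexity $I_B(S)$ of a circuit $S$ is the sum of the weights of its gates; $I_B(F)$ is the minimum of $I_B(S)$ over all circuits $S$ over $B$ realizing $F$. A chain is a sequence $\tilde\alpha_1,\ldots,\tilde\alpha_r$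 of pairwise distinct tuples of $E_k^n$ with $\tilde\alpha_i\le\tilde\alpha_{i+1}$ for $i=1,\ldots,r-1$. A pair $(\tilde\alpha,\tilde\beta)$ with $\tilde\alpha\le\tilde\beta$ is a jump for a system $F$ if $f(\tilde\alpha)>f(\tilde\beta)$ for at least one $f\in F$. For a chain $C=(\tilde\alpha_1,\ldots,\tilde\alpha_r)$, the decrease $d_C(F)$ is the number of $i\in\{1,\ldots,r-1\}$ such that $(\tilde\alpha_i,\tilde\alpha_{i+1})$ is a jump for $F$. The decrease $d(F)$ is the maximum of $d_C(F)$ over all chains $C$ in $E_k^n$. For $f\in P_k(n)$ and a chain $C=(\tilde\alpha_1,\ldots,\tilde\alpha_r)$ in $E_k^n$, $u_C(f)$ is the maximum length $t$ of a subsequence $\tilde\beta_1,\ldots,\tilde\beta_t$ of $C$ (taken in the order of $C$) with $f(\tilde\beta_1)>f(\tilde\beta_2)>\cdots>f(\tilde\beta_t)$. The inversion power $u(f)$ is the maximum of $u_C(f)$ over all chains $C$ in $E_k^n$, and the inversion power of the basis is $u(B)=\max\{u(f): f\in B\}$ (note $u(B)\ge 2$ since $B$ contains a non-monotone function). *)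

theory Defs
  imports Complex_Main "HOL-Library.Sublist"
begin

definition tuples :: "nat \<Rightarrow> nat \<Rightarrow> nat list set" where
  "tuples k n = {xs. length xs = n \<and> (\<forall>x\<in>set xs. x < k)}"

definition tle :: "nat list \<Rightarrow> nat list \<Rightarrow> bool" where
  "tle a b \<longleftrightarrow> list_all2 (\<le>) a b"

definition in_Pk :: "nat \<Rightarrow> nat \<Rightarrow> (nat list \<Rightarrow> nat) \<Rightarrow> bool" where
  "in_Pk k q g \<longleftrightarrow> (\<forall>a\<in>tuples k q. g a < k)"

definition monotone_k :: "nat \<Rightarrow> nat \<Rightarrow> (nat list \<Rightarrow> nat) \<Rightarrow> bool" where
  "monotone_k k q g \<longleftrightarrow> (\<forall>a\<in>tuples k q. \<forall>b\<in>tuples k q. tle a b \<longrightarrow> g a \<le> g b)"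

(* M: monotone functions of P_k, all arities; elements are (arity, function) *)
definition monoset :: "nat \<Rightarrow> (nat \<times> (nat list \<Rightarrow> nat)) set" where
  "monoset k = {(q, g). in_Pk k q g \<and> monotone_k k q g}"

definition is_chain :: "nat \<Rightarrow> nat \<Rightarrow> nat list list \<Rightarrow> bool" where
  "is_chain k n C \<longleftrightarrow> distinct C \<and> set C \<subseteq> tuples k n \<and>
     (\<forall>i. Suc i < length C \<longrightarrow> tle (C ! i) (C ! Suc i))"

definition is_jump :: "(nat list \<Rightarrow> nat) set \<Rightarrow> nat list \<Rightarrow> nat list \<Rightarrow> bool" where
  "is_jump F a b \<longleftrightarrow> tle a b \<and> (\<exists>f\<in>F. f a > f b)"

definition decrease_chain :: "(nat list \<Rightarrow> nat) set \<Rightarrow> nat list list \<Rightarrow> nat" where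
  "decrease_chain F C = card {i. Suc i < length C \<and> is_jump F (C ! i) (C ! Suc i)}"

definition decrease :: "nat \<Rightarrow> nat \<Rightarrow> (nat list \<Rightarrow> nat) set \<Rightarrow> nat" where
  "decrease k n F = Max {decrease_chain F C | C. is_chain k n C}"

definition inv_chain :: "(nat list \<Rightarrow> nat) \<Rightarrow> nat list list \<Rightarrow> nat" where
  "inv_chain f C = Max {length ys | ys. subseq ys C \<and> sorted_wrt (\<lambda>a b. f a > f b) ys}"

definition inv_power :: "nat \<Rightarrow> nat \<Rightarrow> (nat list \<Rightarrow> nat) \<Rightarrow> nat" where
  "inv_power k q f = Max {inv_chain f C | C. is_chain k q C}"

(* the basis B = M \<union> {\<omega>_1..\<omega>_p}; the \<omega>_i are given as a list of (arity, function) *)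
definition basis :: "nat \<Rightarrow> (nat \<times> (nat list \<Rightarrow> nat)) list \<Rightarrow> (nat \<times> (nat list \<Rightarrow> nat)) set" where
  "basis k oms = monoset k \<union> set oms"

definition inv_power_basis :: "nat \<Rightarrow> (nat \<times> (nat list \<Rightarrow> nat)) list \<Rightarrow> nat" where
  "inv_power_basis k oms = Max {inv_power k q f | q f. (q, f) \<in> basis k oms}"

(* circuits: list of gates in topological order. Nodes 0..n-1 are the inputs x_1..x_n,
   node n+j is gate j. A gate is a label together with the ordered list of its input nodes. *)
datatype glabel = Mon "nat list \<Rightarrow> nat" | Om nat

type_synonym circuit = "(glabel \<times> nat list) list"

fun gate_fun :: "(nat \<times> (nat list \<Rightarrow> nat)) list \<Rightarrow> glabel \<Rightarrow> nat list \<Rightarrow> nat" where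
  "gate_fun oms (Mon g) args = g args"
| "gate_fun oms (Om i) args = snd (oms ! i) args"

definition wf_circuit ::
  "nat \<Rightarrow> (nat \<times> (nat list \<Rightarrow> nat)) list \<Rightarrow> nat \<Rightarrow> circuit \<Rightarrow> bool" where
  "wf_circuit k oms n C \<longleftrightarrow>
     (\<forall>j < length C. (\<forall>m \<in> set (snd (C ! j)). m < n + j) \<and>
        (case fst (C ! j) of
           Mon g \<Rightarrow> (length (snd (C ! j)), g) \<in> monoset k
         | Om i \<Rightarrow> i < length oms \<and> fst (oms ! i) = length (snd (C ! j))))"

definition node_vals :: "(nat \<times> (nat list \<Rightarrow> nat)) list \<Rightarrow> circuit \<Rightarrow> nat list \<Rightarrow> nat list" where
  "node_vals oms C x =
     foldl (\<lambda>vs (l, ins). vs @ [gate_fun oms l (map (\<lambda>m. vs ! m) ins)]) x C"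

definition realizes ::
  "nat \<Rightarrow> (nat \<times> (nat list \<Rightarrow> nat)) list \<Rightarrow> nat \<Rightarrow> circuit \<Rightarrow> (nat list \<Rightarrow> nat) set \<Rightarrow> bool" where
  "realizes k oms n C F \<longleftrightarrow>
     (\<forall>f\<in>F. \<exists>m < n + length C. \<forall>x\<in>tuples k n. node_vals oms C x ! m = f x)"

definition weight :: "circuit \<Rightarrow> nat" where
  "weight C = length (filter (\<lambda>(l, ins). case l of Om _ \<Rightarrow> True | Mon _ \<Rightarrow> False) C)"

definition complexity ::
  "nat \<Rightarrow> (nat \<times> (nat list \<Rightarrow> nat)) list \<Rightarrow> nat \<Rightarrow> (nat list \<Rightarrow> nat) set \<Rightarrow> nat" where
  "complexity k oms n F =
     (LEAST w. \<exists>C. wf_circuit k oms n C \<and> realizes k oms n C F \<and> weight C = w)"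

end

theory Submission
  imports Defs
begin

text \<open>
  Let \<open>D x\<close> be the largest decrease of a chain ending in \<open>x\<close>. Then \<open>D\<close> is monotone, it
  increases strictly along every jump of \<open>F\<close>, and \<open>D < u ^ t\<close> for \<open>u = u(B)\<close> and
  \<open>t = \<lceil>log u (d(F) + 1)\<rceil>\<close>. Some non-monotone \<open>\<omega>\<close> of the basis attains \<open>u\<close>: it strictly
  decreases along a chain \<open>y 0 \<le> \<dots> \<le> y (u - 1)\<close>. Call a function invariant if it takes
  equal values on inputs whose node vectors are comparable. The circuit reads the base-\<open>u\<close> digits
  of \<open>D\<close> from the top, one \<open>\<omega>\<close>-gate per digit: if the higher digits are invariant, the next
  digit \<open>c\<close> is monotone in the node vector, so monotone gates compute \<open>y (c x)\<close>; feeding it to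
  \<open>\<omega>\<close> makes \<open>c\<close> invariant, since \<open>c x' < c x\<close> would give \<open>\<omega> (y (c x')) > \<omega> (y (c x))\<close>.
  After \<open>t\<close> digits \<open>D\<close> is invariant, hence every \<open>f \<in> F\<close> is monotone in the node vector
  and is computed by one more monotone gate.
\<close>

lemma tle_refl [simp]: "tle a a"
  unfolding tle_def by (simp add: list_all2_refl)

lemma tle_trans: "tle a b \<Longrightarrow> tle b c \<Longrightarrow> tle a c"
  unfolding tle_def by (rule list_all2_trans[of "(\<le>)" "(\<le>)" "(\<le>)"]) auto

lemma tle_antisym: "tle a b \<Longrightarrow> tle b a \<Longrightarrow> a = b"
  unfolding tle_def by (rule list_all2_antisym) auto

lemma transp_tle: "transp tle"
  by (auto intro: transpI tle_trans)

lemma tle_append_iff: "length a = length b \<Longrightarrow> tle (a @ c) (b @ d) \<longleftrightarrow> tle a b \<and> tle c d"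
  unfolding tle_def by (rule list_all2_append)

lemma tle_prefixes:
  assumes "prefix a a'" "prefix b b'" "length a = length b" "tle a' b'"
  shows "tle a b"
  using assms by (auto simp: prefix_def tle_append_iff)

lemma tle_nth_sorted:
  assumes "sorted_wrt tle ys" "i \<le> j" "j < length ys"
  shows "tle (ys ! i) (ys ! j)"
  using assms by (cases "i = j") (auto simp: sorted_wrt_iff_nth_less)

lemma finite_tuples: "finite (tuples k n)"
proof -
  have "tuples k n \<subseteq> {xs. set xs \<subseteq> {..<k} \<and> length xs = n}"
    unfolding tuples_def by auto
  then show ?thesis
    using finite_lists_length_eq[of "{..<k}" n] finite_subset by blast
qed

lemma is_chain_iff_sorted:
  "is_chain k n C \<longleftrightarrow> distinct C \<and> set C \<subseteq> tuples k n \<and> sorted_wrt tle C"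
  unfolding is_chain_def sorted_wrt_iff_nth_Suc_transp[OF transp_tle] ..

lemma length_chain_le: "is_chain k n C \<Longrightarrow> length C \<le> card (tuples k n)"
  unfolding is_chain_def by (metis card_mono distinct_card finite_tuples)

lemma chain_tle_last:
  assumes "is_chain k n C" "y \<in> set C"
  shows "tle y (last C)"
proof -
  obtain j where j: "j < length C" "y = C ! j"
    using assms(2) by (auto simp: in_set_conv_nth)
  moreover have "last C = C ! (length C - 1)"
    using j(1) by (intro last_conv_nth) auto
  ultimately show ?thesis
    using assms(1) tle_nth_sorted[of C j "length C - 1"] by (auto simp: is_chain_iff_sorted)
qed

lemma is_chain_snoc:
  assumes C: "is_chain k n C" "C \<noteq> []" and x: "x \<in> tuples k n" "tle (last C) x" "x \<noteq> last C"
  shows "is_chain k n (C @ [x])"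
proof -
  have below: "tle y x" if "y \<in> set C" for y
    using tle_trans[OF chain_tle_last[OF C(1) that] x(2)] .
  have "x \<notin> set C"
    using chain_tle_last[OF C(1)] x(2,3) tle_antisym by blast
  then show ?thesis
    using C(1) x(1) below unfolding is_chain_iff_sorted by (auto simp: sorted_wrt_append)
qed

lemma decrease_chain_le_length: "decrease_chain F C \<le> length C"
proof -
  have "{i. Suc i < length C \<and> is_jump F (C ! i) (C ! Suc i)} \<subseteq> {..<length C}" by auto
  then show ?thesis
    unfolding decrease_chain_def by (metis card_lessThan card_mono finite_lessThan)
qed

lemma finite_decrease_chains: "finite {decrease_chain F C | C. is_chain k n C}"
proof (rule finite_subset)
  show "{decrease_chain F C | C. is_chain k n C} \<subseteq> {..card (tuples k n)}"
    using decrease_chain_le_length length_chain_le by (fastforce intro: le_trans)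
qed simp

lemma decrease_chain_snoc:
  assumes "C \<noteq> []"
  shows "decrease_chain F (C @ [x]) = decrease_chain F C + (if is_jump F (last C) x then 1 else 0)"
proof -
  let ?S = "{i. Suc i < length C \<and> is_jump F (C ! i) (C ! Suc i)}"
  let ?T = "{i. i = length C - 1 \<and> is_jump F (last C) x}"
  have "{i. Suc i < length (C @ [x]) \<and> is_jump F ((C @ [x]) ! i) ((C @ [x]) ! Suc i)} = ?S \<union> ?T"
  proof (rule set_eqI)
    fix i
    show "i \<in> {i. Suc i < length (C @ [x]) \<and> is_jump F ((C @ [x]) ! i) ((C @ [x]) ! Suc i)}
      \<longleftrightarrow> i \<in> ?S \<union> ?T"
    proof (cases "Suc i < length C")
      case False
      have "length C > 0" using assms by simp
      then show ?thesis using False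
        by (cases "i = length C - 1") (auto simp: nth_append last_conv_nth)
    qed (auto simp: nth_append)
  qed
  moreover have "card (?S \<union> ?T) = card ?S + card ?T"
    by (rule card_Un_disjoint) (auto intro: finite_subset[of _ "{..<length C}"])
  moreover have "card ?T = (if is_jump F (last C) x then 1 else 0)" by auto
  ultimately show ?thesis unfolding decrease_chain_def by simp
qed

lemma decrease_chain_le_decrease: "is_chain k n C \<Longrightarrow> decrease_chain F C \<le> decrease k n F"
  unfolding decrease_def using finite_decrease_chains by (auto intro: Max_ge)

definition decrease_to :: "nat \<Rightarrow> nat \<Rightarrow> (nat list \<Rightarrow> nat) set \<Rightarrow> nat list \<Rightarrow> nat" where
  "decrease_to k n F x = Max {decrease_chain F C | C. is_chain k n C \<and> C \<noteq> [] \<and> last C = x}"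

lemma
  assumes "x \<in> tuples k n"
  shows decrease_to_attained:
      "\<exists>C. is_chain k n C \<and> C \<noteq> [] \<and> last C = x \<and> decrease_chain F C = decrease_to k n F x"
    and decrease_chain_le_decrease_to:
      "is_chain k n C \<Longrightarrow> C \<noteq> [] \<Longrightarrow> last C = x \<Longrightarrow> decrease_chain F C \<le> decrease_to k n F x"
proof -
  let ?A = "{decrease_chain F C | C. is_chain k n C \<and> C \<noteq> [] \<and> last C = x}"
  have fin: "finite ?A"
    by (rule finite_subset[OF _ finite_decrease_chains]) auto
  have "is_chain k n [x]"
    using assms unfolding is_chain_def by auto
  then have "?A \<noteq> {}" by force
  then show "\<exists>C. is_chain k n C \<and> C \<noteq> [] \<and> last C = x \<and> decrease_chain F C = decrease_to k n F x"
    using Max_in[OF fin] unfolding decrease_to_def by force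
  show "is_chain k n C \<Longrightarrow> C \<noteq> [] \<Longrightarrow> last C = x \<Longrightarrow> decrease_chain F C \<le> decrease_to k n F x"
    unfolding decrease_to_def using fin by (auto intro: Max_ge)
qed

lemma decrease_to_le_decrease: "x \<in> tuples k n \<Longrightarrow> decrease_to k n F x \<le> decrease k n F"
  using decrease_to_attained decrease_chain_le_decrease by metis

lemma decrease_to_snoc:
  assumes x: "x \<in> tuples k n" and x': "x' \<in> tuples k n" "tle x' x" "x' \<noteq> x"
  shows "decrease_to k n F x' + (if is_jump F x' x then 1 else 0) \<le> decrease_to k n F x"
proof -
  obtain C where C: "is_chain k n C" "C \<noteq> []" "last C = x'" "decrease_chain F C = decrease_to k n F x'"
    using decrease_to_attained[OF x'(1)] by blast
  have "is_chain k n (C @ [x])"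
    using is_chain_snoc[OF C(1,2) x] C(3) x' by simp
  then have "decrease_chain F (C @ [x]) \<le> decrease_to k n F x"
    using decrease_chain_le_decrease_to[OF x] by simp
  then show ?thesis
    using decrease_chain_snoc[OF C(2), of F x] C(3,4) by simp
qed

lemma decrease_to_mono:
  "x \<in> tuples k n \<Longrightarrow> x' \<in> tuples k n \<Longrightarrow> tle x' x \<Longrightarrow> decrease_to k n F x' \<le> decrease_to k n F x"
  using decrease_to_snoc[of x k n x' F] by (cases "x' = x") auto

lemma decrease_to_jump:
  "x \<in> tuples k n \<Longrightarrow> x' \<in> tuples k n \<Longrightarrow> is_jump F x' x \<Longrightarrow> decrease_to k n F x' < decrease_to k n F x"
  using decrease_to_snoc[of x k n x' F] by (cases "x' = x") (auto simp: is_jump_def)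

lemma sorted_wrt_subseq: "subseq xs ys \<Longrightarrow> sorted_wrt R ys \<Longrightarrow> sorted_wrt R xs"
proof (induction rule: list_emb.induct)
  case (list_emb_Cons2 x y xs ys)
  then show ?case by (auto elim: list_emb_set)
qed auto

lemma
  shows inv_chain_attained:
      "\<exists>ys. subseq ys C \<and> sorted_wrt (\<lambda>a b. f a > f b) ys \<and> length ys = inv_chain f C"
    and inv_chain_le_length: "inv_chain f C \<le> length C"
    and inv_chain_ge: "subseq ys C \<Longrightarrow> sorted_wrt (\<lambda>a b. f a > f b) ys \<Longrightarrow> length ys \<le> inv_chain f C"
proof -
  let ?A = "{length ys | ys. subseq ys C \<and> sorted_wrt (\<lambda>a b. f a > f b) ys}"
  have bounded: "?A \<subseteq> {..length C}"
    by (auto dest: list_emb_length)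
  then have fin: "finite ?A"
    using finite_subset by blast
  have "[] \<in> {ys. subseq ys C \<and> sorted_wrt (\<lambda>a b. f a > f b) ys}" by simp
  then have "?A \<noteq> {}" by blast
  then show "\<exists>ys. subseq ys C \<and> sorted_wrt (\<lambda>a b. f a > f b) ys \<and> length ys = inv_chain f C"
    using Max_in[OF fin] unfolding inv_chain_def by force
  show "inv_chain f C \<le> length C"
    using Max_in[OF fin \<open>?A \<noteq> {}\<close>] bounded unfolding inv_chain_def by auto
  show "subseq ys C \<Longrightarrow> sorted_wrt (\<lambda>a b. f a > f b) ys \<Longrightarrow> length ys \<le> inv_chain f C"
    unfolding inv_chain_def using fin by (auto intro: Max_ge)
qed

lemma
  shows inv_power_attained: "\<exists>C. is_chain k q C \<and> inv_chain f C = inv_power k q f"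
    and inv_power_ge: "is_chain k q C \<Longrightarrow> inv_chain f C \<le> inv_power k q f"
proof -
  let ?A = "{inv_chain f C | C. is_chain k q C}"
  have fin: "finite ?A"
    by (rule finite_subset[of _ "{..card (tuples k q)}"])
      (use inv_chain_le_length length_chain_le in \<open>fastforce intro: le_trans\<close>, simp)
  have "is_chain k q []"
    unfolding is_chain_def by simp
  then have "?A \<noteq> {}" by blast
  then show "\<exists>C. is_chain k q C \<and> inv_chain f C = inv_power k q f"
    using Max_in[OF fin] unfolding inv_power_def by force
  show "is_chain k q C \<Longrightarrow> inv_chain f C \<le> inv_power k q f"
    unfolding inv_power_def using fin by (auto intro: Max_ge)
qed

lemma inv_power_le_1_if_monotone:
  assumes "monotone_k k q f"
  shows "inv_power k q f \<le> 1"
proof -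
  obtain C where C: "is_chain k q C" "inv_chain f C = inv_power k q f"
    using inv_power_attained by blast
  obtain ys where ys: "subseq ys C" "sorted_wrt (\<lambda>a b. f a > f b) ys" "length ys = inv_chain f C"
    using inv_chain_attained by blast
  have "length ys \<le> 1"
  proof (rule ccontr)
    assume "\<not> length ys \<le> 1"
    then have two: "(0::nat) < 1" "1 < length ys" by simp_all
    have "tle (ys ! 0) (ys ! 1)"
      using sorted_wrt_subseq[OF ys(1)] C(1) two by (auto simp: is_chain_iff_sorted sorted_wrt_nth_less)
    moreover have "ys ! 0 \<in> tuples k q" "ys ! 1 \<in> tuples k q"
      using list_emb_set[OF ys(1)] C(1) two unfolding is_chain_def
      by (metis subsetD nth_mem order.strict_trans)+
    ultimately have "f (ys ! 0) \<le> f (ys ! 1)"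
      using assms unfolding monotone_k_def by blast
    moreover have "f (ys ! 0) > f (ys ! 1)"
      using sorted_wrt_nth_less[OF ys(2) two] .
    ultimately show False by simp
  qed
  then show ?thesis using C ys by simp
qed

lemma inv_power_ge_2_if_not_monotone:
  assumes "\<not> monotone_k k q f"
  shows "2 \<le> inv_power k q f"
proof -
  obtain a b where ab: "a \<in> tuples k q" "b \<in> tuples k q" "tle a b" "f a > f b"
    using assms unfolding monotone_k_def by (auto simp: not_le)
  then have "is_chain k q [a, b]"
    unfolding is_chain_def by (auto simp: less_Suc_eq)
  moreover have "length [a, b] \<le> inv_chain f [a, b]"
    using ab(4) by (intro inv_chain_ge) auto
  ultimately show ?thesis
    using inv_power_ge[of k q "[a, b]" f] by simp
qed

lemma
  assumes "\<forall>(q, w) \<in> set oms. \<not> monotone_k k q w" "oms \<noteq> []"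
  shows inv_power_basis_ge_2: "2 \<le> inv_power_basis k oms"
    and inv_power_basis_attained: "\<exists>(q, w) \<in> set oms. inv_power k q w = inv_power_basis k oms"
proof -
  let ?A = "{inv_power k q f | q f. (q, f) \<in> basis k oms}"
  have "?A \<subseteq> {0, 1} \<union> (\<lambda>(q, f). inv_power k q f) ` set oms"
    using inv_power_le_1_if_monotone unfolding basis_def monoset_def by fastforce
  then have fin: "finite ?A"
    by (rule finite_subset) simp
  obtain q0 w0 where qw0: "(q0, w0) \<in> set oms"
    using assms(2) by (metis list.set_sel(1) surj_pair)
  have "2 \<le> inv_power k q0 w0"
    using inv_power_ge_2_if_not_monotone assms(1) qw0 by auto
  also have "\<dots> \<le> inv_power_basis k oms"
    unfolding inv_power_basis_def using fin qw0 unfolding basis_def by (intro Max_ge) auto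
  finally show two: "2 \<le> inv_power_basis k oms" .
  have "inv_power_basis k oms \<in> ?A"
    unfolding inv_power_basis_def using fin qw0 unfolding basis_def by (intro Max_in) auto
  then obtain q w where qw: "(q, w) \<in> basis k oms" "inv_power k q w = inv_power_basis k oms"
    by auto
  have "(q, w) \<notin> monoset k"
    using inv_power_le_1_if_monotone qw two unfolding monoset_def by fastforce
  then show "\<exists>(q, w) \<in> set oms. inv_power k q w = inv_power_basis k oms"
    using qw unfolding basis_def by auto
qed

lemma inversion_chain_of_basis:
  assumes "\<forall>(q, w) \<in> set oms. \<not> monotone_k k q w" "oms \<noteq> []"
  obtains i q w ys where "i < length oms" "oms ! i = (q, w)" "length ys = inv_power_basis k oms"
    "set ys \<subseteq> tuples k q" "sorted_wrt tle ys" "sorted_wrt (\<lambda>a b. w a > w b) ys"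
proof -
  obtain q w where qw: "(q, w) \<in> set oms" "inv_power k q w = inv_power_basis k oms"
    using inv_power_basis_attained[OF assms] by blast
  then obtain i where "i < length oms" "oms ! i = (q, w)"
    by (metis in_set_conv_nth)
  moreover obtain C where C: "is_chain k q C" "inv_chain w C = inv_power k q w"
    using inv_power_attained by blast
  moreover obtain ys where ys: "subseq ys C" "sorted_wrt (\<lambda>a b. w a > w b) ys"
    "length ys = inv_chain w C"
    using inv_chain_attained by blast
  moreover have "set ys \<subseteq> tuples k q" "sorted_wrt tle ys"
    using C(1) list_emb_set[OF ys(1)] sorted_wrt_subseq[OF ys(1)]
    unfolding is_chain_iff_sorted by blast+
  ultimately show ?thesis
    using that qw(2) by simp
qed

lemma node_vals_Nil [simp]: "node_vals oms [] x = x"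
  unfolding node_vals_def by simp

lemma node_vals_snoc: "node_vals oms (C @ [(l, ins)]) x =
   node_vals oms C x @ [gate_fun oms l (map (\<lambda>m. node_vals oms C x ! m) ins)]"
  unfolding node_vals_def by simp

lemma length_node_vals: "length (node_vals oms C x) = length x + length C"
  by (induction C rule: rev_induct) (auto simp: node_vals_snoc)

lemma prefix_node_vals_append: "prefix (node_vals oms C x) (node_vals oms (C @ G) x)"
proof (induction G rule: rev_induct)
  case (snoc g G)
  obtain l ins where "g = (l, ins)"
    by fastforce
  then show ?case
    using snoc.IH node_vals_snoc[of oms "C @ G" l ins x] by (auto simp: prefix_def)
qed simp

lemma tle_node_vals_append:
  assumes "tle (node_vals oms (C @ G) x') (node_vals oms (C @ G) x)" "length x' = length x"
  shows "tle (node_vals oms C x') (node_vals oms C x)"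
  using tle_prefixes[OF prefix_node_vals_append prefix_node_vals_append _ assms(1)] assms(2)
  by (simp add: length_node_vals)

lemma tle_node_vals_inputs:
  "tle (node_vals oms C x') (node_vals oms C x) \<Longrightarrow> length x' = length x \<Longrightarrow> tle x' x"
  using tle_node_vals_append[of oms "[]" C x' x] by simp

lemma wf_circuit_append:
  "wf_circuit k oms n (C @ G) \<longleftrightarrow> wf_circuit k oms n C \<and>
   (\<forall>j < length G. (\<forall>m \<in> set (snd (G ! j)). m < n + length C + j) \<and>
      (case fst (G ! j) of
         Mon g \<Rightarrow> (length (snd (G ! j)), g) \<in> monoset k
       | Om i \<Rightarrow> i < length oms \<and> fst (oms ! i) = length (snd (G ! j))))"
proof -
  have split: "(\<forall>j < a + b. P j) \<longleftrightarrow> (\<forall>j < a. P j) \<and> (\<forall>j < b. P (a + j))" for a b :: nat and P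
    by (metis add_less_cancel_left le_add_diff_inverse not_le trans_less_add1)
  show ?thesis
    unfolding wf_circuit_def length_append split by (simp add: nth_append add.assoc cong: glabel.case_cong)
qed

lemma weight_append: "weight (C @ G) = weight C + weight G"
  unfolding weight_def by simp

definition monotone_through :: "nat list set \<Rightarrow> (nat list \<Rightarrow> nat list) \<Rightarrow> (nat list \<Rightarrow> nat) \<Rightarrow> bool" where
  "monotone_through T V \<phi> \<longleftrightarrow> (\<forall>x\<in>T. \<forall>x'\<in>T. tle (V x') (V x) \<longrightarrow> \<phi> x' \<le> \<phi> x)"

definition invariant_through :: "nat list set \<Rightarrow> (nat list \<Rightarrow> nat list) \<Rightarrow> (nat list \<Rightarrow> nat) \<Rightarrow> bool" where
  "invariant_through T V \<phi> \<longleftrightarrow> (\<forall>x\<in>T. \<forall>x'\<in>T. tle (V x') (V x) \<longrightarrow> \<phi> x' = \<phi> x)"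

lemma invariant_through_node_vals_append:
  assumes "invariant_through (tuples k n) (node_vals oms C) \<phi>"
  shows "invariant_through (tuples k n) (node_vals oms (C @ G)) \<phi>"
  unfolding invariant_through_def
proof (intro ballI impI)
  fix x x' assume x: "x \<in> tuples k n" "x' \<in> tuples k n"
    and "tle (node_vals oms (C @ G) x') (node_vals oms (C @ G) x)"
  then have "tle (node_vals oms C x') (node_vals oms C x)"
    using tle_node_vals_append by (auto simp: tuples_def)
  then show "\<phi> x' = \<phi> x"
    using assms x unfolding invariant_through_def by blast
qed

text \<open>The least monotone function \<open>g\<close> with \<open>\<phi> x \<le> g (V x)\<close> for all \<open>x \<in> T\<close>.\<close>
definition mono_ext :: "nat list set \<Rightarrow> (nat list \<Rightarrow> nat list) \<Rightarrow> (nat list \<Rightarrow> nat) \<Rightarrow> nat list \<Rightarrow> nat" where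
  "mono_ext T V \<phi> y = Max (insert 0 {\<phi> x | x. x \<in> T \<and> tle (V x) y})"

lemma finite_mono_ext_values: "finite T \<Longrightarrow> finite (insert 0 {\<phi> x | x. x \<in> T \<and> tle (V x) y})"
  by (rule finite_insert[THEN iffD2], rule finite_subset[of _ "\<phi> ` T"]) auto

lemma mono_ext_eq:
  assumes "finite T" "monotone_through T V \<phi>" "x \<in> T"
  shows "mono_ext T V \<phi> (V x) = \<phi> x"
  unfolding mono_ext_def
  by (rule Max_eqI[OF finite_mono_ext_values[OF assms(1)]])
    (use assms(2,3) in \<open>auto simp: monotone_through_def\<close>)

lemma mono_ext_in_monoset:
  assumes "finite T" "0 < k" "\<forall>x\<in>T. \<phi> x < k"
  shows "(N, mono_ext T V \<phi>) \<in> monoset k"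
  unfolding monoset_def in_Pk_def monotone_k_def
proof (intro CollectI conjI ballI impI case_prodI)
  fix a
  show "mono_ext T V \<phi> a < k"
    unfolding mono_ext_def using assms Max_in[OF finite_mono_ext_values[OF assms(1)]] by fastforce
next
  fix a b assume "tle a b"
  then show "mono_ext T V \<phi> a \<le> mono_ext T V \<phi> b"
    unfolding mono_ext_def using finite_mono_ext_values[OF assms(1)] tle_trans
    by (intro Max_mono) blast+
qed

lemma node_vals_append_Mon_gates:
  assumes "length x + length C = N"
  shows "node_vals oms (C @ map (\<lambda>a. (Mon (g a), [0..<N])) as) x
    = node_vals oms C x @ map (\<lambda>a. g a (node_vals oms C x)) as"
proof (induction as rule: rev_induct)
  case (snoc a as)
  let ?V = "node_vals oms C x"
  have "map (\<lambda>m. (?V @ map (\<lambda>a. g a ?V) as) ! m) [0..<N] = ?V"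
    using assms by (intro nth_equalityI) (auto simp: length_node_vals nth_append)
  then show ?case
    using snoc.IH node_vals_snoc[of oms "C @ map (\<lambda>a. (Mon (g a), [0..<N])) as" "Mon (g a)" "[0..<N]" x]
    by simp
qed simp

definition mono_gates ::
  "nat \<Rightarrow> nat \<Rightarrow> (nat \<times> (nat list \<Rightarrow> nat)) list \<Rightarrow> circuit \<Rightarrow> (nat list \<Rightarrow> nat) list \<Rightarrow> circuit" where
  "mono_gates k n oms C \<phi>s =
     map (\<lambda>\<phi>. (Mon (mono_ext (tuples k n) (node_vals oms C) \<phi>), [0..<n + length C])) \<phi>s"

lemma weight_mono_gates [simp]: "weight (mono_gates k n oms C \<phi>s) = 0"
  unfolding weight_def mono_gates_def by (induction \<phi>s) auto

lemma length_mono_gates [simp]: "length (mono_gates k n oms C \<phi>s) = length \<phi>s"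
  unfolding mono_gates_def by simp

lemma wf_mono_gates:
  assumes "wf_circuit k oms n C" "0 < k" "\<forall>\<phi>\<in>set \<phi>s. \<forall>x\<in>tuples k n. \<phi> x < k"
  shows "wf_circuit k oms n (C @ mono_gates k n oms C \<phi>s)"
  using assms mono_ext_in_monoset[OF finite_tuples]
  unfolding wf_circuit_append mono_gates_def by auto

lemma node_vals_mono_gates:
  assumes "x \<in> tuples k n" "\<forall>\<phi>\<in>set \<phi>s. monotone_through (tuples k n) (node_vals oms C) \<phi>"
  shows "node_vals oms (C @ mono_gates k n oms C \<phi>s) x = node_vals oms C x @ map (\<lambda>\<phi>. \<phi> x) \<phi>s"
proof -
  have "length x + length C = n + length C"
    using assms(1) by (simp add: tuples_def)
  then have "node_vals oms (C @ mono_gates k n oms C \<phi>s) x = node_vals oms C x @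
      map (\<lambda>\<phi>. mono_ext (tuples k n) (node_vals oms C) \<phi> (node_vals oms C x)) \<phi>s"
    unfolding mono_gates_def by (rule node_vals_append_Mon_gates)
  also have "\<dots> = node_vals oms C x @ map (\<lambda>\<phi>. \<phi> x) \<phi>s"
    using assms mono_ext_eq[OF finite_tuples] by simp
  finally show ?thesis .
qed

lemma monotone_through_chain_entry:
  assumes ys: "set ys \<subseteq> tuples k q" "sorted_wrt tle ys"
    and c: "\<forall>x\<in>T. c x < length ys" "monotone_through T V c" and j: "j < q"
  shows "monotone_through T V (\<lambda>x. ys ! c x ! j)"
  unfolding monotone_through_def
proof (intro ballI impI)
  fix x x' assume x: "x \<in> T" "x' \<in> T" and "tle (V x') (V x)"
  then have "tle (ys ! c x') (ys ! c x)"
    using tle_nth_sorted[OF ys(2)] c unfolding monotone_through_def by blast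
  moreover have "length (ys ! c x) = q"
    using ys(1) c(1) x(1) nth_mem unfolding tuples_def by blast
  ultimately show "ys ! c x' ! j \<le> ys ! c x ! j"
    using j unfolding tle_def list_all2_conv_all_nth by auto
qed

definition omega_stage ::
  "nat \<Rightarrow> nat \<Rightarrow> (nat \<times> (nat list \<Rightarrow> nat)) list \<Rightarrow> circuit \<Rightarrow> nat \<Rightarrow> nat \<Rightarrow> nat list list \<Rightarrow>
    (nat list \<Rightarrow> nat) \<Rightarrow> circuit" where
  "omega_stage k n oms C i q ys c =
     mono_gates k n oms C (map (\<lambda>j x. ys ! c x ! j) [0..<q]) @
     [(Om i, [n + length C..<n + length C + q])]"

lemma weight_omega_stage: "weight (omega_stage k n oms C i q ys c) = 1"
  unfolding omega_stage_def weight_append weight_mono_gates by (simp add: weight_def)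

lemma wf_omega_stage:
  assumes "wf_circuit k oms n C" "0 < k" "i < length oms" "fst (oms ! i) = q"
    and "set ys \<subseteq> tuples k q" "\<forall>x\<in>tuples k n. c x < length ys"
  shows "wf_circuit k oms n (C @ omega_stage k n oms C i q ys c)"
proof -
  have "\<forall>x\<in>tuples k n. ys ! c x \<in> tuples k q"
    using assms(5,6) nth_mem by blast
  then have "wf_circuit k oms n (C @ mono_gates k n oms C (map (\<lambda>j x. ys ! c x ! j) [0..<q]))"
    using wf_mono_gates[OF assms(1,2)] unfolding tuples_def by auto
  then show ?thesis
    using assms(3,4) unfolding omega_stage_def append_assoc[symmetric] wf_circuit_append by simp
qed

lemma node_vals_omega_stage:
  assumes "oms ! i = (q, w)" "set ys \<subseteq> tuples k q" "sorted_wrt tle ys"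
    and c: "\<forall>x\<in>tuples k n. c x < length ys" "monotone_through (tuples k n) (node_vals oms C) c"
    and x: "x \<in> tuples k n"
  shows "node_vals oms (C @ omega_stage k n oms C i q ys c) x
    = node_vals oms C x @ ys ! c x @ [w (ys ! c x)]"
proof -
  let ?M = "mono_gates k n oms C (map (\<lambda>j x. ys ! c x ! j) [0..<q])" and ?N = "n + length C"
  have y: "ys ! c x \<in> tuples k q"
    using assms(2) c(1) x nth_mem by blast
  have "map (\<lambda>j. ys ! c x ! j) [0..<q] = ys ! c x"
    using y unfolding tuples_def by (auto intro: nth_equalityI)
  then have M: "node_vals oms (C @ ?M) x = node_vals oms C x @ ys ! c x"
    using node_vals_mono_gates[OF x] monotone_through_chain_entry[OF assms(2,3) c]
    by (simp add: comp_def)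
  have "length (node_vals oms C x) = ?N" "length (ys ! c x) = q"
    using x y by (simp_all add: length_node_vals tuples_def)
  then have "map (\<lambda>m. node_vals oms (C @ ?M) x ! m) [?N..<?N + q] = ys ! c x"
    unfolding M by (auto intro: nth_equalityI simp: nth_append)
  then show ?thesis
    using node_vals_snoc[of oms "C @ ?M" "Om i" "[?N..<?N + q]" x] M assms(1)
    unfolding omega_stage_def by simp
qed

lemma invariant_through_omega_stage:
  assumes "oms ! i = (q, w)" "set ys \<subseteq> tuples k q" "sorted_wrt tle ys"
    "sorted_wrt (\<lambda>a b. w a > w b) ys"
    and c: "\<forall>x\<in>tuples k n. c x < length ys" "monotone_through (tuples k n) (node_vals oms C) c"
  shows "invariant_through (tuples k n) (node_vals oms (C @ omega_stage k n oms C i q ys c)) c"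
  unfolding invariant_through_def
proof (intro ballI impI)
  let ?V = "node_vals oms C"
  fix x x' assume x: "x \<in> tuples k n" "x' \<in> tuples k n"
    and le: "tle (node_vals oms (C @ omega_stage k n oms C i q ys c) x')
      (node_vals oms (C @ omega_stage k n oms C i q ys c) x)"
  have "ys ! c x \<in> tuples k q" "ys ! c x' \<in> tuples k q"
    using assms(2) c(1) x nth_mem by blast+
  then have "length (?V x') = length (?V x)" "length (ys ! c x') = length (ys ! c x)"
    using x by (simp_all add: length_node_vals tuples_def)
  then have "tle (?V x') (?V x)" "w (ys ! c x') \<le> w (ys ! c x)"
    using le unfolding node_vals_omega_stage[OF assms(1-3) c x(1)]
      node_vals_omega_stage[OF assms(1-3) c x(2)]
    by (simp_all add: tle_def list_all2_append)
  then have "c x' \<le> c x" "\<not> c x' < c x"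
    using x c assms(4) unfolding monotone_through_def by (auto dest: sorted_wrt_nth_less)
  then show "c x' = c x" by simp
qed

lemma mod_le_mod_if_div_eq: "(a::nat) \<le> b \<Longrightarrow> a div u = b div u \<Longrightarrow> a mod u \<le> b mod u"
  by (metis add_le_cancel_left div_mult_mod_eq)

lemma invariant_digit_stage:
  assumes k: "0 < k" and om: "i < length oms" "oms ! i = (q, w)"
    and ys: "set ys \<subseteq> tuples k q" "sorted_wrt tle ys" "sorted_wrt (\<lambda>a b. w a > w b) ys"
    and u: "0 < length ys"
    and mono: "\<forall>x\<in>tuples k n. \<forall>x'\<in>tuples k n. tle x' x \<longrightarrow> D x' \<le> D x"
    and C: "wf_circuit k oms n C" "invariant_through (tuples k n) (node_vals oms C) (\<lambda>x. D x div length ys)"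
  obtains G where "wf_circuit k oms n (C @ G)" "weight G = 1"
    "invariant_through (tuples k n) (node_vals oms (C @ G)) D"
proof -
  let ?u = "length ys" and ?T = "tuples k n"
  define c where "c x = D x mod ?u" for x
  define G where "G = omega_stage k n oms C i q ys c"
  have "monotone_through ?T (node_vals oms C) c"
    unfolding monotone_through_def
  proof (intro ballI impI)
    fix x x' assume x: "x \<in> ?T" "x' \<in> ?T" and le: "tle (node_vals oms C x') (node_vals oms C x)"
    then have "D x' \<le> D x"
      using mono tle_node_vals_inputs by (simp add: tuples_def)
    moreover have "D x' div ?u = D x div ?u"
      using C(2) x le unfolding invariant_through_def by blast
    ultimately show "c x' \<le> c x"
      unfolding c_def by (rule mod_le_mod_if_div_eq)
  qed
  moreover have c_less: "\<forall>x\<in>?T. c x < ?u"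
    using u by (simp add: c_def)
  ultimately have "invariant_through ?T (node_vals oms (C @ G)) c"
    using invariant_through_omega_stage[OF om(2) ys] unfolding G_def by blast
  then have "invariant_through ?T (node_vals oms (C @ G)) D"
    using invariant_through_node_vals_append[OF C(2)]
    unfolding invariant_through_def c_def by (metis div_mult_mod_eq)
  moreover have "wf_circuit k oms n (C @ G)"
    unfolding G_def using wf_omega_stage[OF C(1) k om(1)] om(2) ys(1) c_less by simp
  ultimately show ?thesis
    using that weight_omega_stage unfolding G_def by blast
qed

lemma invariant_circuit_exists:
  assumes k: "0 < k" and om: "i < length oms" "oms ! i = (q, w)"
    and ys: "set ys \<subseteq> tuples k q" "sorted_wrt tle ys" "sorted_wrt (\<lambda>a b. w a > w b) ys"
    and mono: "\<forall>x\<in>tuples k n. \<forall>x'\<in>tuples k n. tle x' x \<longrightarrow> D x' \<le> D x"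
    and bound: "\<forall>x\<in>tuples k n. D x < length ys ^ m"
  shows "\<exists>C. wf_circuit k oms n C \<and> weight C = m \<and> invariant_through (tuples k n) (node_vals oms C) D"
  using mono bound
proof (induction m arbitrary: D)
  case 0
  have "wf_circuit k oms n []" "weight [] = 0"
    unfolding wf_circuit_def weight_def by simp_all
  moreover have "invariant_through (tuples k n) (node_vals oms []) D"
    using "0.prems"(2) unfolding invariant_through_def by simp
  ultimately show ?case by blast
next
  case (Suc m)
  let ?u = "length ys" and ?T = "tuples k n"
  have "\<forall>x\<in>?T. \<forall>x'\<in>?T. tle x' x \<longrightarrow> D x' div ?u \<le> D x div ?u"
    using Suc.prems(1) by (simp add: div_le_mono)
  moreover have "\<forall>x\<in>?T. D x div ?u < ?u ^ m"
    using Suc.prems(2) by (simp add: less_mult_imp_div_less mult.commute)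
  ultimately obtain C where C: "wf_circuit k oms n C" "weight C = m"
    "invariant_through ?T (node_vals oms C) (\<lambda>x. D x div ?u)"
    using Suc.IH[of "\<lambda>x. D x div ?u"] by blast
  have "replicate n 0 \<in> ?T"
    using k by (simp add: tuples_def)
  then have "0 < ?u"
    using Suc.prems(2) by (cases ?u) auto
  then obtain G where "wf_circuit k oms n (C @ G)" "weight G = 1"
    "invariant_through ?T (node_vals oms (C @ G)) D"
    using invariant_digit_stage[OF k om ys _ Suc.prems(1) C(1,3)] by blast
  then show ?case
    using C(2) by (auto simp: weight_append)
qed

lemma monotone_through_if_invariant_decrease_to:
  assumes "invariant_through (tuples k n) (node_vals oms C) (decrease_to k n F)" "f \<in> F"
  shows "monotone_through (tuples k n) (node_vals oms C) f"
  unfolding monotone_through_def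
proof (intro ballI impI)
  fix x x' assume x: "x \<in> tuples k n" "x' \<in> tuples k n"
    and le: "tle (node_vals oms C x') (node_vals oms C x)"
  then have tle: "tle x' x"
    using tle_node_vals_inputs by (simp add: tuples_def)
  have eq: "decrease_to k n F x' = decrease_to k n F x"
    using assms(1) x le unfolding invariant_through_def by blast
  show "f x' \<le> f x"
  proof (rule ccontr)
    assume "\<not> f x' \<le> f x"
    then have "is_jump F x' x"
      using tle assms(2) unfolding is_jump_def by (blast intro: leI)
    then have "decrease_to k n F x' < decrease_to k n F x"
      by (rule decrease_to_jump[OF x])
    with eq show False by simp
  qed
qed

lemma realizes_mono_gates:
  assumes "set fs = F" "\<forall>f\<in>F. monotone_through (tuples k n) (node_vals oms C) f"
  shows "realizes k oms n (C @ mono_gates k n oms C fs) F"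
  unfolding realizes_def
proof
  fix f assume "f \<in> F"
  then obtain j where j: "j < length fs" "fs ! j = f"
    using assms(1) by (metis in_set_conv_nth)
  show "\<exists>m < n + length (C @ mono_gates k n oms C fs).
    \<forall>x\<in>tuples k n. node_vals oms (C @ mono_gates k n oms C fs) x ! m = f x"
  proof (intro exI conjI ballI)
    show "n + length C + j < n + length (C @ mono_gates k n oms C fs)"
      using j by simp
    fix x assume x: "x \<in> tuples k n"
    show "node_vals oms (C @ mono_gates k n oms C fs) x ! (n + length C + j) = f x"
      using node_vals_mono_gates[OF x] assms j x by (simp add: nth_append length_node_vals tuples_def)
  qed
qed

lemma realizing_circuit_exists:
  assumes k: "0 < k" and om: "i < length oms" "oms ! i = (q, w)"
    and ys: "set ys \<subseteq> tuples k q" "sorted_wrt tle ys" "sorted_wrt (\<lambda>a b. w a > w b) ys"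
    and F: "finite F" "\<forall>f\<in>F. in_Pk k n f"
    and t: "decrease k n F < length ys ^ t"
  shows "\<exists>C. wf_circuit k oms n C \<and> realizes k oms n C F \<and> weight C = t"
proof -
  have "\<forall>x\<in>tuples k n. decrease_to k n F x < length ys ^ t"
    using decrease_to_le_decrease t le_less_trans by blast
  moreover have "\<forall>x\<in>tuples k n. \<forall>x'\<in>tuples k n. tle x' x \<longrightarrow> decrease_to k n F x' \<le> decrease_to k n F x"
    using decrease_to_mono by blast
  ultimately obtain C where C: "wf_circuit k oms n C" "weight C = t"
    "invariant_through (tuples k n) (node_vals oms C) (decrease_to k n F)"
    using invariant_circuit_exists[OF k om ys] by blast
  obtain fs where fs: "set fs = F"
    using finite_list[OF F(1)] by blast
  have "wf_circuit k oms n (C @ mono_gates k n oms C fs)"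
    using wf_mono_gates[OF C(1) k] F(2) fs unfolding in_Pk_def by auto
  moreover have "realizes k oms n (C @ mono_gates k n oms C fs) F"
    using realizes_mono_gates[OF fs] monotone_through_if_invariant_decrease_to[OF C(3)] by blast
  ultimately show ?thesis
    using C(2) by (auto simp: weight_append)
qed

lemma complexity_le_weight:
  "wf_circuit k oms n C \<Longrightarrow> realizes k oms n C F \<Longrightarrow> complexity k oms n F \<le> weight C"
  unfolding complexity_def by (rule Least_le) blast

lemma le_pow_ceiling_log:
  fixes u d :: nat
  assumes "2 \<le> u"
  shows "d + 1 \<le> u ^ nat \<lceil>log (real u) (real d + 1)\<rceil>"
proof -
  let ?t = "nat \<lceil>log (real u) (real d + 1)\<rceil>"
  have u: "1 < real u"
    using assms by simp
  have "log (real u) (real d + 1) \<le> real ?t"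
    by linarith
  then have "real u powr log (real u) (real d + 1) \<le> real u powr real ?t"
    using u by (intro powr_mono) auto
  also have "\<dots> = real u ^ ?t"
    by (rule powr_realpow) (use u in simp)
  finally have "real d + 1 \<le> real u ^ ?t"
    using u by simp
  then show ?thesis
    by (metis of_nat_1 of_nat_add of_nat_le_iff of_nat_power)
qed

theorem theorem2:
  fixes k n :: nat
    and oms :: "(nat \<times> (nat list \<Rightarrow> nat)) list"
    and F :: "(nat list \<Rightarrow> nat) set"
  assumes "k \<ge> 2"
    and "length oms \<ge> 1"
    and "\<forall>(q, w) \<in> set oms. in_Pk k q w \<and> \<not> monotone_k k q w"
    and "finite F"
    and "\<forall>f\<in>F. in_Pk k n f"
  shows "(\<exists>C. wf_circuit k oms n C \<and> realizes k oms n C F) \<and>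
         int (complexity k oms n F)
           \<le> \<lceil>log (real (inv_power_basis k oms)) (real (decrease k n F) + 1)\<rceil>"
proof -
  let ?u = "inv_power_basis k oms" and ?d = "decrease k n F"
  define t where "t = nat \<lceil>log (real ?u) (real ?d + 1)\<rceil>"
  have oms: "\<forall>(q, w) \<in> set oms. \<not> monotone_k k q w" "oms \<noteq> []"
    using assms(2,3) by auto
  obtain i q w ys where om: "i < length oms" "oms ! i = (q, w)" and len: "length ys = ?u"
    and ys: "set ys \<subseteq> tuples k q" "sorted_wrt tle ys" "sorted_wrt (\<lambda>a b. w a > w b) ys"
    using inversion_chain_of_basis[OF oms] by blast
  have u: "2 \<le> ?u"
    using inv_power_basis_ge_2[OF oms] .
  then have "?d < length ys ^ t"
    using le_pow_ceiling_log[OF u, of ?d] len unfolding t_def by simp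
  then obtain C where C: "wf_circuit k oms n C" "realizes k oms n C F" "weight C = t"
    using realizing_circuit_exists[OF _ om ys assms(4,5)] assms(1) by auto
  have "0 \<le> log (real ?u) (real ?d + 1)"
    using u by simp
  then have "int (complexity k oms n F) \<le> \<lceil>log (real ?u) (real ?d + 1)\<rceil>"
    using complexity_le_weight[OF C(1,2)] C(3) unfolding t_def by linarith
  then show ?thesis
    using C by blast
qed

end
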